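(* If $\mathcal{S}\in\mathrm{Rep}$, then every formal extended multi-segment in $[\mathcal{S}]$ is an extended multi-segment.
   Context: Formal extended segment: $([A,B]_\rho,\mu)$ with $\rho$ irreducible self-dual supercuspidal of some $\mathrm{GL}_d(F)$ ($F$ $p$-adic), $A-B\in\mathbb{Z}_{\ge0}$, $\mu\in\mathbb{Z}$, $\mu\equiv b\pmod2$ with $b=A-B+1$, $a=A+B+1$; extended segment if moreover $|\mu|\le b$. A formal extended multi-segment $\mathcal{S}$: a finite set $C_{\mathcal{S}}$ of such $\rho$ and sequences $(([A_i^\rho,B_i^\rho]_\rho,\mu_i^\rho))_{i=1}^{n_\rho}$ of formal extended segments with: $A_i^\rho>A_j^\rho$ and $B_i^\rho>B_j^\rho$ imply $i>j$; $A_i^\rho+B_i^\rho\ge0$; $\bigoplus_{\rho,i}\rho\boxtimes S_{a_i^\rho}\boxtimes S_{b_i^\rho}$ is an Arthur parameter of good parity for some $G_n$ ($G_n$ split $\mathrm{SO}_{2n+1}(F)$ or $\mathrm{Sp}_{2n}(F)$); $\sum_\rho\sum_i(\lfloor\mu_i^\rho/2\rfloor+\mu_i^\rho\sum_{j<i}(b_j^\rho-1))\equiv0\pmod2$. Extended multi-segment: all entries are extended segments. Admissible: for each $\rho$ with some $B_i^\rho<0$, $B_i^\rho>B_j^\rho\Rightarrow i>j$. Condition (N): $|A_i^\rho-A_{i-1}^\rho|+|B_i^\rho-B_{i-1}^\rho|\ge|\mu_i^\rho-\mu_{i-1}^\rho|$ for all $\rho$, $1<i\le n_\rho$. Reorder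 $R_i^\rho$ (changing only positions $i,i+1$ of the $\rho$-sequence): if $[A_i,B_i]\subseteq[A_{i+1},B_{i+1}]$, replace by $([A_{i+1},B_{i+1}]_\rho,2\mu_i-\mu_{i+1}),([A_i,B_i]_\rho,\mu_i)$; if $[A_i,B_i]\supseteq[A_{i+1},B_{i+1}]$, replace by $([A_{i+1},B_{i+1}]_\rho,\mu_{i+1}),([A_i,B_i]_\rho,2\mu_{i+1}-\mu_i)$; if $A_{i+1}\ge A_i$, $B_{i+1}\ge B_i$, do nothing. $[\mathcal{S}]$ is the equivalence class generated by these operations. $\mathrm{Rep}$: admissible extended multi-segments $\mathcal{S}$ such that every element of $[\mathcal{S}]$ satisfies (N), and $|\hat\mu_i^\rho|\le a_i^\rho$ for all $i,\rho$, where $\hat\mu_i^\rho=\mu_i^\rho$ if $B_i^\rho\in\mathbb{Z}$ and $\mu_i^\rho-1$ otherwise. *)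

theory Defs
  imports Complex_Main
begin

text \<open>A (formal) extended segment ([A,B]_rho, mu) is stored as a triple (A, B, mu);
  A and B are half-integers, represented as rationals.  A formal extended multi-segment
  is a function assigning to each supercuspidal rho (elements of an abstract type 'r)
  its sequence (a list, 0-indexed) of segments; C_S is its finite support.
  Each rho comes with data: its dimension d rho (rho a rep of GL_d), whether it is of
  symplectic type (sympl rho; otherwise orthogonal), and its determinant character
  detc rho (an element of an abstract commutative monoid of characters).\<close>

type_synonym seg = "rat \<times> rat \<times> int"

definition segA :: "seg \<Rightarrow> rat" where "segA s = fst s"
definition segB :: "seg \<Rightarrow> rat" where "segB s = fst (snd s)"
definition segmu :: "seg \<Rightarrow> int" where "segmu s = snd (snd s)"

definition seg_b :: "seg \<Rightarrow> int" where "seg_b s = \<lfloor>segA s - segB s\<rfloor> + 1"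
definition seg_a :: "seg \<Rightarrow> rat" where "seg_a s = segA s + segB s + 1"

definition formal_ext_seg :: "seg \<Rightarrow> bool" where
  "formal_ext_seg s \<longleftrightarrow> 2 * segB s \<in> \<int> \<and> segA s - segB s \<in> \<int> \<and> segB s \<le> segA s
     \<and> segmu s mod 2 = seg_b s mod 2"

definition ext_seg :: "seg \<Rightarrow> bool" where
  "ext_seg s \<longleftrightarrow> formal_ext_seg s \<and> \<bar>segmu s\<bar> \<le> seg_b s"

definition supp_ms :: "('r \<Rightarrow> seg list) \<Rightarrow> 'r set" where
  "supp_ms S = {\<rho>. S \<rho> \<noteq> []}"

datatype classical_group = SO_odd | Sp_even

text \<open>sum over rho, i of  rho (x) S_a (x) S_b  is an Arthur parameter of good parity for
  G_n (G_n = SO_(2n+1) with dual Sp_(2n)(C), or G_n = Sp_(2n) with dual SO_(2n+1)(C)).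
  S_k has sign (-1)^(k-1), so rho (x) S_a (x) S_b is symplectic iff
  (rho symplectic <-> a+b even).\<close>
definition good_parity_AP ::
  "('r \<Rightarrow> nat) \<Rightarrow> ('r \<Rightarrow> bool) \<Rightarrow> ('r \<Rightarrow> 'c::comm_monoid_mult) \<Rightarrow> classical_group \<Rightarrow> nat
    \<Rightarrow> ('r \<Rightarrow> seg list) \<Rightarrow> bool" where
  "good_parity_AP d sympl detc G n S \<longleftrightarrow>
     (\<forall>\<rho>. \<forall>s\<in>set (S \<rho>). seg_a s \<in> \<int> \<and> 1 \<le> seg_a s \<and>
         ((sympl \<rho> \<longleftrightarrow> even (\<lfloor>seg_a s\<rfloor> + seg_b s)) \<longleftrightarrow> G = SO_odd))
   \<and> (\<Sum>\<rho>\<in>supp_ms S. \<Sum>s\<leftarrow>S \<rho>. int (d \<rho>) * \<lfloor>seg_a s\<rfloor> * seg_b s)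
       = (if G = SO_odd then 2 * int n else 2 * int n + 1)
   \<and> (G = Sp_even \<longrightarrow>
       (\<Prod>\<rho>\<in>supp_ms S. \<Prod>s\<leftarrow>S \<rho>. detc \<rho> ^ nat (\<lfloor>seg_a s\<rfloor> * seg_b s)) = 1)"

definition parity_sum :: "('r \<Rightarrow> seg list) \<Rightarrow> int" where
  "parity_sum S = (\<Sum>\<rho>\<in>supp_ms S. \<Sum>i<length (S \<rho>).
      segmu (S \<rho> ! i) div 2 + segmu (S \<rho> ! i) * (\<Sum>j<i. seg_b (S \<rho> ! j) - 1))"

definition formal_ext_ms ::
  "('r \<Rightarrow> nat) \<Rightarrow> ('r \<Rightarrow> bool) \<Rightarrow> ('r \<Rightarrow> 'c::comm_monoid_mult) \<Rightarrow> ('r \<Rightarrow> seg list) \<Rightarrow> bool" where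
  "formal_ext_ms d sympl detc S \<longleftrightarrow>
     finite (supp_ms S)
   \<and> (\<forall>\<rho>. \<forall>s\<in>set (S \<rho>). formal_ext_seg s)
   \<and> (\<forall>\<rho> i j. i < length (S \<rho>) \<and> j < length (S \<rho>)
        \<and> segA (S \<rho> ! i) > segA (S \<rho> ! j) \<and> segB (S \<rho> ! i) > segB (S \<rho> ! j) \<longrightarrow> i > j)
   \<and> (\<forall>\<rho>. \<forall>s\<in>set (S \<rho>). 0 \<le> segA s + segB s)
   \<and> (\<exists>G n. good_parity_AP d sympl detc G n S)
   \<and> even (parity_sum S)"

definition ext_ms ::
  "('r \<Rightarrow> nat) \<Rightarrow> ('r \<Rightarrow> bool) \<Rightarrow> ('r \<Rightarrow> 'c::comm_monoid_mult) \<Rightarrow> ('r \<Rightarrow> seg list) \<Rightarrow> bool" where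
  "ext_ms d sympl detc S \<longleftrightarrow> formal_ext_ms d sympl detc S \<and> (\<forall>\<rho>. \<forall>s\<in>set (S \<rho>). ext_seg s)"

definition admissible :: "('r \<Rightarrow> seg list) \<Rightarrow> bool" where
  "admissible S \<longleftrightarrow> (\<forall>\<rho>. (\<exists>s\<in>set (S \<rho>). segB s < 0) \<longrightarrow>
      (\<forall>i j. i < length (S \<rho>) \<and> j < length (S \<rho>) \<and> segB (S \<rho> ! i) > segB (S \<rho> ! j) \<longrightarrow> i > j))"

definition cond_N :: "('r \<Rightarrow> seg list) \<Rightarrow> bool" where
  "cond_N S \<longleftrightarrow> (\<forall>\<rho> i. 0 < i \<and> i < length (S \<rho>) \<longrightarrow>
      rat_of_int \<bar>segmu (S \<rho> ! i) - segmu (S \<rho> ! (i - 1))\<bar>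
        \<le> \<bar>segA (S \<rho> ! i) - segA (S \<rho> ! (i - 1))\<bar> + \<bar>segB (S \<rho> ! i) - segB (S \<rho> ! (i - 1))\<bar>)"

text \<open>The operation R_i on the pair of consecutive segments (s, t) = (position i, i+1);
  cases are tried in the order of the paper; None = R_i not defined.\<close>
definition reorder_pair :: "seg \<Rightarrow> seg \<Rightarrow> (seg \<times> seg) option" where
  "reorder_pair s t =
    (if segB t \<le> segB s \<and> segA s \<le> segA t
       then Some ((segA t, segB t, 2 * segmu s - segmu t), s)
     else if segB s \<le> segB t \<and> segA t \<le> segA s
       then Some (t, (segA s, segB s, 2 * segmu t - segmu s))
     else if segA s \<le> segA t \<and> segB s \<le> segB t
       then Some (s, t)
     else None)"

definition reorder_step :: "('r \<Rightarrow> seg list) \<Rightarrow> ('r \<Rightarrow> seg list) \<Rightarrow> bool" where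
  "reorder_step S S' \<longleftrightarrow> (\<exists>\<rho> i x y. Suc i < length (S \<rho>)
      \<and> reorder_pair (S \<rho> ! i) (S \<rho> ! Suc i) = Some (x, y)
      \<and> S' = S(\<rho> := (S \<rho>)[i := x, Suc i := y]))"

definition ms_equiv :: "('r \<Rightarrow> seg list) \<Rightarrow> ('r \<Rightarrow> seg list) \<Rightarrow> bool" where
  "ms_equiv = (\<lambda>S S'. reorder_step S S' \<or> reorder_step S' S)\<^sup>*\<^sup>*"

definition mu_hat :: "seg \<Rightarrow> int" where
  "mu_hat s = (if segB s \<in> \<int> then segmu s else segmu s - 1)"

definition in_Rep ::
  "('r \<Rightarrow> nat) \<Rightarrow> ('r \<Rightarrow> bool) \<Rightarrow> ('r \<Rightarrow> 'c::comm_monoid_mult) \<Rightarrow> ('r \<Rightarrow> seg list) \<Rightarrow> bool" where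
  "in_Rep d sympl detc S \<longleftrightarrow> admissible S \<and> ext_ms d sympl detc S
     \<and> (\<forall>S'. ms_equiv S S' \<longrightarrow> cond_N S')
     \<and> (\<forall>\<rho>. \<forall>s\<in>set (S \<rho>). rat_of_int \<bar>mu_hat s\<bar> \<le> seg_a s)"

end

theory Submission
  imports Defs
begin

text \<open>The bound \<open>|\<mu>| \<le> b\<close> is invariant under each reordering \<open>R\<^sub>i\<close> as long as (N) holds
  at the pair being reordered. In the nested case \<open>[A\<^sub>s,B\<^sub>s] \<subseteq> [A\<^sub>t,B\<^sub>t]\<close> condition (N)
  reads \<open>|\<mu>\<^sub>t - \<mu>\<^sub>s| \<le> b\<^sub>t - b\<^sub>s\<close>, so with \<open>|\<mu>\<^sub>s| \<le> b\<^sub>s\<close> both \<open>|\<mu>\<^sub>t| \<le> b\<^sub>t\<close> and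
  \<open>|2\<mu>\<^sub>s - \<mu>\<^sub>t| \<le> b\<^sub>t\<close> hold, i.e. the bound holds before the move iff it holds after it.
  Since every member of \<open>[S]\<close> satisfies (N), the bound travels along any chain of
  reorderings and their inverses starting at \<open>S\<close>.\<close>

definition mu_bounded :: "seg \<Rightarrow> bool" where
  "mu_bounded s \<longleftrightarrow> \<bar>segmu s\<bar> \<le> seg_b s"

definition ms_mu_bounded :: "('r \<Rightarrow> seg list) \<Rightarrow> bool" where
  "ms_mu_bounded S \<longleftrightarrow> (\<forall>\<rho>. list_all mu_bounded (S \<rho>))"

lemma ext_ms_iff_formal_and_mu_bounded:
  "ext_ms d sympl detc S \<longleftrightarrow> formal_ext_ms d sympl detc S \<and> ms_mu_bounded S"
  by (auto simp: ext_ms_def formal_ext_ms_def ext_seg_def ms_mu_bounded_def mu_bounded_def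
      list_all_iff)

lemma floor_diff_ge:
  fixes x y :: "'a::floor_ceiling"
  assumes "of_int k \<le> x - y"
  shows "k \<le> \<lfloor>x\<rfloor> - \<lfloor>y\<rfloor>"
proof -
  have "k \<le> \<lfloor>x - y\<rfloor>" using assms by (simp add: le_floor_iff)
  moreover have "\<lfloor>x - y\<rfloor> + \<lfloor>y\<rfloor> \<le> \<lfloor>x\<rfloor>" using le_floor_add[of "x - y" y] by simp
  ultimately show ?thesis by linarith
qed

lemma cond_N_pair_nested:
  assumes "segB t \<le> segB s" "segA s \<le> segA t"
    and "rat_of_int \<bar>segmu t - segmu s\<bar> \<le> \<bar>segA t - segA s\<bar> + \<bar>segB t - segB s\<bar>"
  shows "\<bar>segmu t - segmu s\<bar> \<le> seg_b t - seg_b s"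
proof -
  have "rat_of_int \<bar>segmu t - segmu s\<bar> \<le> (segA t - segB t) - (segA s - segB s)"
    using assms by simp
  from floor_diff_ge[OF this] show ?thesis by (simp add: seg_b_def)
qed

lemma mu_bounded_reflect_nested:
  assumes "segB t \<le> segB s" "segA s \<le> segA t"
    and "rat_of_int \<bar>segmu t - segmu s\<bar> \<le> \<bar>segA t - segA s\<bar> + \<bar>segB t - segB s\<bar>"
  shows "mu_bounded s \<and> mu_bounded t \<longleftrightarrow>
    mu_bounded s \<and> mu_bounded (segA t, segB t, 2 * segmu s - segmu t)"
proof -
  have "\<bar>segmu t - segmu s\<bar> \<le> seg_b t - seg_b s" using cond_N_pair_nested assms .
  moreover have "seg_b (segA t, segB t, m) = seg_b t" for m
    by (simp add: seg_b_def segA_def segB_def)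
  ultimately show ?thesis by (auto simp: mu_bounded_def segmu_def)
qed

lemma mu_bounded_reorder_pair_iff:
  assumes pair: "reorder_pair s t = Some (x, y)"
    and N: "rat_of_int \<bar>segmu t - segmu s\<bar> \<le> \<bar>segA t - segA s\<bar> + \<bar>segB t - segB s\<bar>"
  shows "mu_bounded s \<and> mu_bounded t \<longleftrightarrow> mu_bounded x \<and> mu_bounded y"
proof -
  consider (s_in_t) "segB t \<le> segB s \<and> segA s \<le> segA t"
    | (t_in_s) "\<not> (segB t \<le> segB s \<and> segA s \<le> segA t)" "segB s \<le> segB t \<and> segA t \<le> segA s"
    | (ordered) "x = s" "y = t"
    using pair by (auto simp: reorder_pair_def split: if_splits)
  then show ?thesis
  proof cases
    case s_in_t
    then have "x = (segA t, segB t, 2 * segmu s - segmu t)" "y = s"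
      using pair by (auto simp: reorder_pair_def)
    with s_in_t show ?thesis using mu_bounded_reflect_nested N by blast
  next
    case t_in_s
    then have "x = t" "y = (segA s, segB s, 2 * segmu t - segmu s)"
      using pair by (auto simp: reorder_pair_def)
    moreover have "rat_of_int \<bar>segmu s - segmu t\<bar> \<le> \<bar>segA s - segA t\<bar> + \<bar>segB s - segB t\<bar>"
      using N by (simp add: abs_minus_commute)
    ultimately show ?thesis using t_in_s mu_bounded_reflect_nested by blast
  qed simp
qed

lemma list_all_update_pair_iff:
  assumes "Suc i < length xs" and "P (xs ! i) \<and> P (xs ! Suc i) \<longleftrightarrow> P x \<and> P y"
  shows "list_all P (xs[i := x, Suc i := y]) \<longleftrightarrow> list_all P xs"
proof -
  define us vs where "us = take i xs" and "vs = drop (Suc (Suc i)) xs"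
  have us: "length us = i" using assms(1) by (simp add: us_def)
  have xs: "xs = us @ xs ! i # xs ! Suc i # vs"
    using assms(1) unfolding us_def vs_def
    by (metis Cons_nth_drop_Suc Suc_lessD append_take_drop_id)
  have "xs[i := x, Suc i := y] = us @ x # y # vs"
    by (subst xs) (simp add: us list_update_append)
  then show ?thesis using assms(2) by (subst (2) xs) auto
qed

lemma ms_mu_bounded_reorder_step_iff:
  assumes step: "reorder_step S S'" and N: "cond_N S"
  shows "ms_mu_bounded S' \<longleftrightarrow> ms_mu_bounded S"
proof -
  obtain \<rho> i x y where i: "Suc i < length (S \<rho>)"
    and pair: "reorder_pair (S \<rho> ! i) (S \<rho> ! Suc i) = Some (x, y)"
    and S': "S' = S(\<rho> := (S \<rho>)[i := x, Suc i := y])"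
    using step unfolding reorder_step_def by blast
  have "rat_of_int \<bar>segmu (S \<rho> ! Suc i) - segmu (S \<rho> ! i)\<bar>
      \<le> \<bar>segA (S \<rho> ! Suc i) - segA (S \<rho> ! i)\<bar> + \<bar>segB (S \<rho> ! Suc i) - segB (S \<rho> ! i)\<bar>"
    using N i unfolding cond_N_def by (metis diff_Suc_1 zero_less_Suc)
  from mu_bounded_reorder_pair_iff[OF pair this]
  have "list_all mu_bounded (S' \<rho>) \<longleftrightarrow> list_all mu_bounded (S \<rho>)"
    using list_all_update_pair_iff[OF i] S' by simp
  then show ?thesis using S' unfolding ms_mu_bounded_def by (metis fun_upd_other)
qed

lemma ms_mu_bounded_ms_equiv:
  assumes "ms_equiv S S'" and "\<And>X. ms_equiv S X \<Longrightarrow> cond_N X" and "ms_mu_bounded S"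
  shows "ms_mu_bounded S'"
  using assms(1) unfolding ms_equiv_def
proof (induction rule: rtranclp_induct)
  case base
  show ?case using assms(3) .
next
  case (step X Y)
  have "cond_N X" "cond_N Y"
    using step.hyps assms(2) unfolding ms_equiv_def by (auto intro: rtranclp.rtrancl_into_rtrancl)
  with step.hyps(2) step.IH show ?case using ms_mu_bounded_reorder_step_iff by blast
qed

theorem proposition3p4:
  fixes d :: "'r \<Rightarrow> nat" and sympl :: "'r \<Rightarrow> bool" and detc :: "'r \<Rightarrow> 'c::comm_monoid_mult"
    and S S' :: "'r \<Rightarrow> seg list"
  assumes "in_Rep d sympl detc S"
    and "ms_equiv S S'"
    and "formal_ext_ms d sympl detc S'"
  shows "ext_ms d sympl detc S'"
proof -
  have "ms_mu_bounded S"
    using assms(1) by (simp add: in_Rep_def ext_ms_iff_formal_and_mu_bounded)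
  moreover have "\<And>X. ms_equiv S X \<Longrightarrow> cond_N X"
    using assms(1) by (simp add: in_Rep_def)
  ultimately have "ms_mu_bounded S'" using ms_mu_bounded_ms_equiv assms(2) by blast
  with assms(3) show ?thesis by (simp add: ext_ms_iff_formal_and_mu_bounded)
qed

end
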